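(* Let $R$ be a ring with identity and $a,b,c,p,q\in R$, and suppose there exist $p',q'\in R$ with $q'qb=b$ and $cpp'=c$. The following are equivalent: (i) $paq$ is $(b,c)$-invertible; (ii) $a$ is $(qb,cp)$-invertible. In this case, if $y$ is the $(b,c)$-inverse of $paq$ and $w$ is the $(qb,cp)$-inverse of $a$, then $w=qyp$.
   Context: For $\alpha,b,c\in R$, $\alpha$ is $(b,c)$-invertible if there is $y\in R$ with $y\in (bRy)\cap(yRc)$, $y\alpha b=b$ and $c\alpha y=c$, where $xR=\{xr:r\in R\}$ and $Rx=\{rx:r\in R\}$; such $y$ is unique and called the $(b,c)$-inverse of $\alpha$. *)

theory Defs
  imports Main
begin

definition is_bc_inverse :: "'r::ring_1 \<Rightarrow> 'r \<Rightarrow> 'r \<Rightarrow> 'r \<Rightarrow> bool" where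
  "is_bc_inverse a b c y \<longleftrightarrow>
     (\<exists>r. y = b * r * y) \<and> (\<exists>s. y = y * s * c) \<and> y * a * b = b \<and> c * a * y = c"

definition bc_invertible :: "'r::ring_1 \<Rightarrow> 'r \<Rightarrow> 'r \<Rightarrow> bool" where
  "bc_invertible a b c \<longleftrightarrow> (\<exists>y. is_bc_inverse a b c y)"

end

theory Submission
  imports Defs
begin

text \<open>If \<open>y\<close> is the \<open>(b,c)\<close>-inverse of \<open>paq\<close>,
  then \<open>qyp\<close> is the \<open>(qb,cp)\<close>-inverse of \<open>a\<close>; this needs no hypothesis at all. Conversely,
  if \<open>w\<close> is the \<open>(qb,cp)\<close>-inverse of \<open>a\<close>, then \<open>q'wp'\<close> is the \<open>(b,c)\<close>-inverse of \<open>paq\<close>: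
  since \<open>w \<in> qbRw\<close> and \<open>w \<in> wRcp\<close>, the one-sided cancellations \<open>q'qb = b\<close> and \<open>cpp' = c\<close>
  give \<open>qq'w = w\<close> and \<open>wp'p = w\<close>. Uniqueness of \<open>(b,c)\<close>-inverses then yields \<open>w = qyp\<close>.\<close>

lemma is_bc_inverse_unique:
  assumes "is_bc_inverse a b c u" and "is_bc_inverse a b c v"
  shows "u = v"
proof -
  from assms(1) obtain s where s: "u = u * s * c" and ub: "u * a * b = b"
    unfolding is_bc_inverse_def by blast
  from assms(2) obtain r where r: "v = b * r * v" and cv: "c * a * v = c"
    unfolding is_bc_inverse_def by blast
  have "u = (u * s * c) * a * v"
    using s cv by (metis mult.assoc)
  also have "\<dots> = u * a * (b * r * v)"
    using s r by simp
  also have "\<dots> = (u * a * b) * r * v"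
    by (simp add: mult.assoc)
  also have "\<dots> = v"
    using ub r by simp
  finally show ?thesis .
qed

lemma is_bc_inverse_outer_factors:
  assumes "is_bc_inverse (p * a * q) b c y"
  shows "is_bc_inverse a (q * b) (c * p) (q * y * p)"
proof -
  from assms obtain r s where r: "y = b * r * y" and s: "y = y * s * c"
    and yb: "y * (p * a * q) * b = b" and cy: "c * (p * a * q) * y = c"
    unfolding is_bc_inverse_def by blast
  have y_left: "y * s * c * p * a * q * y = y"
    using s cy by (metis mult.assoc)
  have y_right: "y * p * a * q * b * r * y = y"
    using r yb by (metis mult.assoc)
  have "q * y * p = q * b * (r * y * s * c * p * a) * (q * y * p)"
  proof -
    have "q * b * (r * y * s * c * p * a) * (q * y * p)
        = q * b * r * (y * s * c * p * a * q * y) * p"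
      by (simp add: mult.assoc)
    also have "\<dots> = q * y * p"
      using y_left r by (metis mult.assoc)
    finally show ?thesis ..
  qed
  moreover have "q * y * p = q * y * p * (a * q * b * r * y * s) * (c * p)"
  proof -
    have "q * y * p * (a * q * b * r * y * s) * (c * p)
        = q * (y * p * a * q * b * r * y) * s * c * p"
      by (simp add: mult.assoc)
    also have "\<dots> = q * y * p"
      using y_right s by (metis mult.assoc)
    finally show ?thesis ..
  qed
  moreover have "q * y * p * a * (q * b) = q * b"
    using yb by (metis mult.assoc)
  moreover have "c * p * a * (q * y * p) = c * p"
    using cy by (metis mult.assoc)
  ultimately show ?thesis
    unfolding is_bc_inverse_def by blast
qed

lemma is_bc_inverse_cancel_outer_factors:
  assumes q': "q' * q * b = b" and p': "c * p * p' = c"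
    and w: "is_bc_inverse a (q * b) (c * p) w"
  shows "is_bc_inverse (p * a * q) b c (q' * w * p')"
proof -
  from w obtain r s where r: "w = q * b * r * w" and s: "w = w * s * (c * p)"
    and wb: "w * a * (q * b) = q * b" and cw: "c * p * a * w = c * p"
    unfolding is_bc_inverse_def by blast
  have qq'w: "q * q' * w = w"
  proof -
    have "q * q' * w = q * (q' * q * b) * r * w"
      using r by (metis mult.assoc)
    then show ?thesis
      using q' r by simp
  qed
  have wp'p: "w * p' * p = w"
  proof -
    have "w * p' * p = w * s * (c * p * p') * p"
      using s by (metis mult.assoc)
    then show ?thesis
      using p' s by (metis mult.assoc)
  qed
  have "q' * w * p' = b * (r * q) * (q' * w * p')"
  proof -
    have "q' * w * p' = (q' * q * b) * r * (q * q' * w) * p'"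
      using r qq'w by (metis mult.assoc)
    also have "\<dots> = b * (r * q) * (q' * w * p')"
      using q' by (simp add: mult.assoc)
    finally show ?thesis .
  qed
  moreover have "q' * w * p' = q' * w * p' * (p * s) * c"
  proof -
    have "q' * w * p' * (p * s) * c = q' * (w * p' * p) * s * (c * p * p')"
      using p' by (simp add: mult.assoc)
    also have "\<dots> = q' * (w * s * (c * p)) * p'"
      using wp'p by (simp add: mult.assoc)
    finally show ?thesis
      using s by simp
  qed
  moreover have "q' * w * p' * (p * a * q) * b = b"
  proof -
    have "q' * w * p' * (p * a * q) * b = q' * (w * p' * p) * a * (q * b)"
      by (simp add: mult.assoc)
    also have "\<dots> = q' * q * b"
      using wp'p wb by (simp add: mult.assoc)
    finally show ?thesis
      using q' by simp
  qed
  moreover have "c * (p * a * q) * (q' * w * p') = c"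
  proof -
    have "c * (p * a * q) * (q' * w * p') = c * p * a * (q * q' * w) * p'"
      by (simp add: mult.assoc)
    then show ?thesis
      using qq'w cw p' by simp
  qed
  ultimately show ?thesis
    unfolding is_bc_inverse_def by blast
qed

theorem corollary3p5:
  fixes a b c p q p' q' :: "'r::ring_1"
  assumes "q' * q * b = b" and "c * p * p' = c"
  shows "(bc_invertible (p * a * q) b c \<longleftrightarrow> bc_invertible a (q * b) (c * p))
    \<and> (\<forall>y w. is_bc_inverse (p * a * q) b c y \<longrightarrow> is_bc_inverse a (q * b) (c * p) w
         \<longrightarrow> w = q * y * p)"
proof (intro conjI allI impI)
  show "bc_invertible (p * a * q) b c \<longleftrightarrow> bc_invertible a (q * b) (c * p)"
    unfolding bc_invertible_def
    using is_bc_inverse_outer_factors is_bc_inverse_cancel_outer_factors[OF assms] by blast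
next
  fix y w
  assume "is_bc_inverse (p * a * q) b c y" and "is_bc_inverse a (q * b) (c * p) w"
  then show "w = q * y * p"
    using is_bc_inverse_outer_factors is_bc_inverse_unique by blast
qed

end
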